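(* Let $p\in\mathbf{R}_+^n$, $K=(K_1,\dots,K_n)\in\mathbf{R}_{++}^n$, $w\in\mathbf{R}_{++}^n$ and $K_0>0$. Consider \[ p^{\inf}=\inf\Big\{\mathbf{E}_{\pi}(w^{T}x-K_0)_+ \;:\; \pi \mbox{ a probability measure on }\mathbf{R}_+^n,\ \mathbf{E}_{\pi}(x_i-K_i)_+=p_i,\ i=1,\dots,n\Big\}. \] Then \[ p^{\inf}=\inf_{\nu}\Big\{\sum_{i=1}^n\big(p_iw_i-\nu_i(K_0-w_iK_i)_+\big)_+ \;:\; \nu\in\mathbf{R}^n,\ \nu\ge 0,\ \textstyle\sum_i\nu_i=1\Big\}, \] and this value equals \[ \sum_{\{i:\,K_iw_i\ge K_0\}}p_iw_i+\max_{\{j:\,K_jw_j<K_0\}}\Big(\sum_{\{i:\,K_iw_i<K_0\}}p_iw_i\min\Big(1,\frac{K_0-K_jw_j}{K_0-K_iw_i}\Big)-K_0+w_jK_j\Big)_+ , \] where the maximum over an empty index set is taken to be $0$. Moreover, the infimum $p^{\inf}$ is attained or approached by a sequence of discrete probability measures satisfying the constraints.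
   Context: $(y)_+=\max(y,0)$. $\mathbf{R}_{++}^n$ denotes vectors with strictly positive components. *)

theory Defs
  imports "HOL-Probability.Probability"
begin

definition posp :: "real \<Rightarrow> real" where
  "posp y = max y 0"

definition call_feasible :: "real^'n \<Rightarrow> real^'n \<Rightarrow> (real^'n) measure \<Rightarrow> bool" where
  "call_feasible p K M \<longleftrightarrow>
     prob_space M \<and> sets M = sets borel \<and> (AE x in M. \<forall>i. 0 \<le> x$i) \<and>
     (\<forall>i. (\<integral>\<^sup>+ x. ennreal (posp (x$i - K$i)) \<partial>M) = ennreal (p$i))"

definition basket_obj :: "real^'n \<Rightarrow> real \<Rightarrow> (real^'n) measure \<Rightarrow> ennreal" where
  "basket_obj w K0 M = (\<integral>\<^sup>+ x. ennreal (posp ((\<Sum>i\<in>UNIV. w$i * x$i) - K0)) \<partial>M)"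

definition p_inf :: "real^'n \<Rightarrow> real^'n \<Rightarrow> real^'n \<Rightarrow> real \<Rightarrow> ennreal" where
  "p_inf p K w K0 = (INF M\<in>{M. call_feasible p K M}. basket_obj w K0 M)"

definition dual_value :: "real^'n \<Rightarrow> real^'n \<Rightarrow> real^'n \<Rightarrow> real \<Rightarrow> real" where
  "dual_value p K w K0 =
     (INF \<nu>\<in>{\<nu>::real^'n. (\<forall>i. 0 \<le> \<nu>$i) \<and> (\<Sum>i\<in>UNIV. \<nu>$i) = 1}.
        (\<Sum>i\<in>UNIV. posp (p$i * w$i - \<nu>$i * posp (K0 - w$i * K$i))))"

definition discrete_borel :: "(real^'n) pmf \<Rightarrow> (real^'n) measure" where
  "discrete_borel P = distr (measure_pmf P) borel (\<lambda>x. x)"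

definition closed_form :: "real^'n \<Rightarrow> real^'n \<Rightarrow> real^'n \<Rightarrow> real \<Rightarrow> real" where
  "closed_form p K w K0 =
     (\<Sum>i\<in>{i. K$i * w$i \<ge> K0}. p$i * w$i) +
     (let J = {j. K$j * w$j < K0} in
      if J = {} then 0 else
      Max ((\<lambda>j. posp ((\<Sum>i\<in>J. p$i * w$i * min 1 ((K0 - K$j * w$j) / (K0 - K$i * w$i)))
                       - K0 + w$j * K$j)) ` J))"

end

(*
  A pointwise inequality gives weak duality: if 0 <= lam i <= 1 and
  lam i * (K0 - w_i K_i)_+ <= c for all i, then on the positive orthant
  sum_i lam i w_i (x_i - K_i)_+ <= (w^T x - K0)_+ + c, so integrating against any
  feasible measure bounds the basket price from below by sum_i lam i w_i p_i - c.
  The best such bound, with lam i = min 1 (x / a_i), a_i = K0 - w_i K_i and c = x,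
  is a concave piecewise linear function of the single variable x, maximal at 0 or
  at a kink a_j; this is the closed form. The slopes around the maximising kink
  produce a dual vector nu with the same value, and nu is approached by discrete
  measures that put mass nu_i on the point (K_i + p_i / nu_i) e_i and the rest on 0,
  which satisfy the call constraints exactly.
*)
theory Submission
  imports Defs
begin

lemma posp_nonneg: "0 \<le> posp y"
  by (simp add: posp_def)

lemma posp_mult: "0 \<le> t \<Longrightarrow> t * posp y = posp (t * y)"
  by (simp add: posp_def max_mult_distrib_left)

lemma posp_add_le: "0 \<le> d \<Longrightarrow> posp (y + d) \<le> posp y + d"
  by (simp add: posp_def)

lemma mult_le_posp: "0 \<le> m \<Longrightarrow> m \<le> 1 \<Longrightarrow> m * y \<le> posp y"
  by (cases "0 \<le> y") (auto simp: posp_def mult_left_le_one_le mult_nonneg_nonpos)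

text \<open>Convexity of \<open>t \<mapsto> (t - b)\<^sub>+\<close> on \<open>[0, K0]\<close>, where it vanishes at \<open>0\<close>.\<close>
lemma posp_diff_le_chord:
  assumes "0 \<le> y" "y \<le> K0" "0 \<le> b" "0 < K0"
  shows "posp (y - b) \<le> y / K0 * posp (K0 - b)"
proof (cases "y \<le> b")
  case True
  then show ?thesis using assms by (simp add: posp_def)
next
  case False
  have "y * b \<le> K0 * b" using assms by (intro mult_right_mono) auto
  then have "y - b \<le> y / K0 * (K0 - b)" using assms by (simp add: field_simps)
  then show ?thesis using False assms by (simp add: posp_def)
qed

lemma sum_weighted_posp_le_of_sum_le:
  assumes "finite S" and y: "\<forall>i\<in>S. 0 \<le> y i" and b: "\<forall>i\<in>S. 0 \<le> b i"
    and lam: "\<forall>i\<in>S. 0 \<le> lam i" and c: "\<forall>i\<in>S. lam i * posp (K0 - b i) \<le> c"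
    and "0 < K0" "0 \<le> c" and sum_y: "(\<Sum>i\<in>S. y i) \<le> K0"
  shows "(\<Sum>i\<in>S. lam i * posp (y i - b i)) \<le> c"
proof -
  have y_le: "y i \<le> K0" if "i \<in> S" for i
    using member_le_sum[of i S y] assms that by auto
  have "(\<Sum>i\<in>S. lam i * posp (y i - b i)) \<le> (\<Sum>i\<in>S. y i / K0 * (lam i * posp (K0 - b i)))"
  proof (intro sum_mono)
    fix i assume "i \<in> S"
    then have "lam i * posp (y i - b i) \<le> lam i * (y i / K0 * posp (K0 - b i))"
      using posp_diff_le_chord[of "y i" K0 "b i"] y b y_le lam assms(6)
      by (intro mult_left_mono) auto
    then show "lam i * posp (y i - b i) \<le> y i / K0 * (lam i * posp (K0 - b i))"
      by (simp add: mult_ac)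
  qed
  also have "\<dots> \<le> (\<Sum>i\<in>S. y i / K0 * c)"
    using y c assms(6) by (intro sum_mono mult_left_mono) auto
  also have "\<dots> = (\<Sum>i\<in>S. y i) / K0 * c"
    by (simp add: sum_distrib_right sum_divide_distrib)
  also have "\<dots> \<le> c"
    using sum_y sum_nonneg[of S y] y assms(6,7) by (intro mult_left_le_one_le) auto
  finally show ?thesis .
qed

text \<open>If the total exceeds \<open>K0\<close>, scale \<open>y\<close> down to total \<open>K0\<close>; since \<open>lam i \<le> 1\<close>, the
  left side grows by at most the excess.\<close>
lemma sum_weighted_posp_le:
  assumes "finite S" and y: "\<forall>i\<in>S. 0 \<le> y i" and b: "\<forall>i\<in>S. 0 \<le> b i"
    and lam: "\<forall>i\<in>S. 0 \<le> lam i \<and> lam i \<le> 1" and c: "\<forall>i\<in>S. lam i * posp (K0 - b i) \<le> c"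
    and "0 < K0" "0 \<le> c"
  shows "(\<Sum>i\<in>S. lam i * posp (y i - b i)) \<le> posp ((\<Sum>i\<in>S. y i) - K0) + c"
proof (cases "(\<Sum>i\<in>S. y i) \<le> K0")
  case True
  then show ?thesis
    using sum_weighted_posp_le_of_sum_le[OF assms(1-3) _ c assms(6,7)] lam
      posp_nonneg[of "(\<Sum>i\<in>S. y i) - K0"]
    by fastforce
next
  case False
  define s where "s = (\<Sum>i\<in>S. y i)"
  define t where "t = K0 / s"
  define y' where "y' i = t * y i" for i
  have "K0 < s" using False by (simp add: s_def)
  then have t: "0 < t" "t \<le> 1" using assms(6) by (auto simp: t_def)
  have y': "\<forall>i\<in>S. 0 \<le> y' i" using y t by (simp add: y'_def)
  have "(\<Sum>i\<in>S. y' i) = t * s" by (simp add: y'_def s_def sum_distrib_left)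
  then have sum_y': "(\<Sum>i\<in>S. y' i) = K0" using \<open>K0 < s\<close> assms(6) by (simp add: t_def)
  have "(\<Sum>i\<in>S. lam i * posp (y i - b i)) \<le> (\<Sum>i\<in>S. lam i * posp (y' i - b i) + (y i - y' i))"
  proof (intro sum_mono)
    fix i assume i: "i \<in> S"
    have d: "0 \<le> y i - y' i" using y i t by (simp add: y'_def mult_left_le_one_le)
    have "lam i * posp (y i - b i) \<le> lam i * (posp (y' i - b i) + (y i - y' i))"
      using posp_add_le[OF d, of "y' i - b i"] lam i by (intro mult_left_mono) auto
    also have "\<dots> \<le> lam i * posp (y' i - b i) + (y i - y' i)"
      using lam i d by (simp add: distrib_left mult_left_le_one_le)
    finally show "lam i * posp (y i - b i) \<le> lam i * posp (y' i - b i) + (y i - y' i)" .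
  qed
  also have "\<dots> = (\<Sum>i\<in>S. lam i * posp (y' i - b i)) + (s - K0)"
    by (simp add: sum.distrib sum_subtractf s_def sum_y')
  also have "\<dots> \<le> c + (s - K0)"
    using sum_weighted_posp_le_of_sum_le[OF assms(1) y' b _ c assms(6,7)] sum_y' lam by auto
  also have "\<dots> = posp (s - K0) + c" using \<open>K0 < s\<close> by (simp add: posp_def)
  finally show ?thesis unfolding s_def .
qed

lemma borel_measurable_posp [measurable]:
  "f \<in> borel_measurable M \<Longrightarrow> (\<lambda>x. posp (f x)) \<in> borel_measurable M"
  unfolding posp_def by measurable

lemma ennreal_sum_mult:
  assumes "\<And>i. i \<in> S \<Longrightarrow> 0 \<le> f i" "\<And>i. i \<in> S \<Longrightarrow> 0 \<le> g i"
  shows "ennreal (\<Sum>i\<in>S. f i * g i) = (\<Sum>i\<in>S. ennreal (f i) * ennreal (g i))"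
  using assms by (simp add: sum_ennreal[symmetric] ennreal_mult)

lemma call_feasibleD:
  assumes "call_feasible p K M"
  shows "prob_space M" "sets M = sets borel" "AE x in M. \<forall>i. 0 \<le> x$i"
    "\<And>i. (\<integral>\<^sup>+ x. ennreal (posp (x$i - K$i)) \<partial>M) = ennreal (p$i)"
  using assms unfolding call_feasible_def by auto

lemma basket_obj_lower_bound:
  fixes p K w :: "real^'n" and lam :: "'n \<Rightarrow> real"
  assumes p: "\<forall>i. 0 \<le> p$i" and K: "\<forall>i. 0 \<le> K$i" and w: "\<forall>i. 0 \<le> w$i"
    and "0 < K0" "0 \<le> c"
    and lam: "\<forall>i. 0 \<le> lam i \<and> lam i \<le> 1" and lam_c: "\<forall>i. lam i * posp (K0 - w$i * K$i) \<le> c"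
    and feasible: "call_feasible p K M"
  shows "ennreal ((\<Sum>i\<in>UNIV. lam i * w$i * p$i) - c) \<le> basket_obj w K0 M"
proof -
  interpret prob_space M using call_feasibleD(1)[OF feasible] .
  have measurable_eq: "measurable M borel = measurable borel borel"
    using call_feasibleD(2)[OF feasible] by (rule measurable_cong_sets) simp
  have lw: "0 \<le> lam i * w$i" for i using lam w by simp
  have "AE x in M. ennreal (\<Sum>i\<in>UNIV. lam i * w$i * posp (x$i - K$i))
      \<le> ennreal (posp ((\<Sum>i\<in>UNIV. w$i * x$i) - K0)) + ennreal c"
    using call_feasibleD(3)[OF feasible]
  proof eventually_elim
    case (elim x)
    have "(\<Sum>i\<in>UNIV. lam i * w$i * posp (x$i - K$i))
        = (\<Sum>i\<in>UNIV. lam i * posp (w$i * x$i - w$i * K$i))"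
      using w by (simp add: posp_mult mult.assoc right_diff_distrib)
    also have "\<dots> \<le> posp ((\<Sum>i\<in>UNIV. w$i * x$i) - K0) + c"
      using elim p K w lam lam_c assms(4,5) by (intro sum_weighted_posp_le) auto
    finally show ?case
      using assms(5) by (simp add: ennreal_plus[symmetric] posp_nonneg del: ennreal_plus)
  qed
  then have "(\<integral>\<^sup>+ x. ennreal (\<Sum>i\<in>UNIV. lam i * w$i * posp (x$i - K$i)) \<partial>M)
      \<le> (\<integral>\<^sup>+ x. ennreal (posp ((\<Sum>i\<in>UNIV. w$i * x$i) - K0)) + ennreal c \<partial>M)"
    by (rule nn_integral_mono_AE)
  also have "\<dots> = basket_obj w K0 M + ennreal c"
    unfolding basket_obj_def
    by (subst nn_integral_add) (auto simp: measurable_eq emeasure_space_1)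
  also have "(\<integral>\<^sup>+ x. ennreal (\<Sum>i\<in>UNIV. lam i * w$i * posp (x$i - K$i)) \<partial>M)
      = ennreal (\<Sum>i\<in>UNIV. lam i * w$i * p$i)"
    using lw p
    by (simp add: ennreal_sum_mult posp_nonneg nn_integral_sum nn_integral_cmult
        call_feasibleD(4)[OF feasible] measurable_eq)
  finally show ?thesis
    using assms(5) by (simp add: ennreal_minus[symmetric] ennreal_minus_le_iff add.commute)
qed

lemma prob_space_discrete_borel: "prob_space (discrete_borel P)"
  unfolding discrete_borel_def by (rule measure_pmf.prob_space_distr) simp

lemma sets_discrete_borel [simp]: "sets (discrete_borel P) = sets borel"
  by (simp add: discrete_borel_def)

lemma nn_integral_discrete_borel:
  "f \<in> borel_measurable borel \<Longrightarrow> (\<integral>\<^sup>+x. f x \<partial>discrete_borel P) = (\<integral>\<^sup>+x. f x \<partial>measure_pmf P)"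
  unfolding discrete_borel_def by (simp add: nn_integral_distr)

lemma AE_discrete_borel:
  assumes "{x. Q x} \<in> sets borel" "\<forall>x\<in>set_pmf P. Q x"
  shows "AE x in discrete_borel P. Q x"
  unfolding discrete_borel_def using assms by (subst AE_distr_iff) (auto simp: AE_measure_pmf_iff)

text \<open>Mass \<open>pr i\<close> at \<open>s i\<close> and the remaining mass \<open>1 - (\<Sum>i. pr i)\<close> at \<open>z\<close>; this is junk
  unless \<open>pr \<ge> 0\<close> and \<open>(\<Sum>i. pr i) \<le> 1\<close>.\<close>
definition atoms_pmf :: "('i::finite \<Rightarrow> real) \<Rightarrow> ('i \<Rightarrow> 'a) \<Rightarrow> 'a \<Rightarrow> 'a pmf" where
  "atoms_pmf pr s z = map_pmf (case_option z s) (embed_pmf (case_option (1 - sum pr UNIV) pr))"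

lemma
  fixes pr :: "'i::finite \<Rightarrow> real"
  assumes "\<forall>i. 0 \<le> pr i" "sum pr UNIV \<le> 1"
  shows nn_integral_atoms_pmf: "(\<integral>\<^sup>+x. f x \<partial>measure_pmf (atoms_pmf pr s z))
      = ennreal (1 - sum pr UNIV) * f z + (\<Sum>i\<in>UNIV. ennreal (pr i) * f (s i))"
    and set_atoms_pmf: "set_pmf (atoms_pmf pr s z) \<subseteq> insert z (range s)"
proof -
  define g where "g = case_option (1 - sum pr UNIV) pr"
  have sum_option: "(\<Sum>x\<in>UNIV. h x) = h None + (\<Sum>i\<in>UNIV. h (Some i))"
    for h :: "'i option \<Rightarrow> ennreal"
    by (simp add: UNIV_option_conv sum.reindex)
  have g_nonneg: "0 \<le> g x" for x using assms by (simp add: g_def split: option.split)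
  have "(\<integral>\<^sup>+x. ennreal (g x) \<partial>count_space UNIV) = ennreal (\<Sum>x\<in>UNIV. g x)"
    using g_nonneg by (simp add: nn_integral_count_space_finite)
  also have "(\<Sum>x\<in>UNIV. g x) = 1" by (simp add: UNIV_option_conv sum.reindex g_def)
  finally have g_prob: "(\<integral>\<^sup>+x. ennreal (g x) \<partial>count_space UNIV) = 1" by simp
  have "(\<integral>\<^sup>+x. f x \<partial>measure_pmf (atoms_pmf pr s z))
      = (\<integral>\<^sup>+y. f (case_option z s y) \<partial>measure_pmf (embed_pmf g))"
    by (simp add: atoms_pmf_def g_def)
  also have "\<dots> = (\<Sum>y\<in>UNIV. ennreal (g y) * f (case_option z s y))"
    by (simp add: nn_integral_measure_pmf pmf_embed_pmf[OF g_nonneg g_prob]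
        nn_integral_count_space_finite)
  finally show "(\<integral>\<^sup>+x. f x \<partial>measure_pmf (atoms_pmf pr s z))
      = ennreal (1 - sum pr UNIV) * f z + (\<Sum>i\<in>UNIV. ennreal (pr i) * f (s i))"
    by (simp add: sum_option g_def)
  show "set_pmf (atoms_pmf pr s z) \<subseteq> insert z (range s)"
    unfolding atoms_pmf_def by (auto split: option.split)
qed

text \<open>For \<open>pr l > 0\<close>, the atom \<open>(K$l + p$l / pr l) e\<^sub>l\<close> carries exactly the call price
  \<open>p$l\<close> of asset \<open>l\<close> and no value for the other calls.\<close>
definition call_pmf :: "real^'n \<Rightarrow> real^'n \<Rightarrow> ('n \<Rightarrow> real) \<Rightarrow> (real^'n) pmf" where
  "call_pmf p K pr = atoms_pmf pr (\<lambda>l. axis l (K$l + p$l / pr l)) 0"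

lemma axis_nth_eq: "axis l c $ i = (if i = l then c else 0)"
  by (simp add: axis_def)

lemma call_feasible_call_pmf:
  assumes p: "\<forall>i. 0 \<le> p$i" and K: "\<forall>i. 0 \<le> K$i"
    and pr: "\<forall>i. 0 < pr i" "sum pr UNIV \<le> 1"
  shows "call_feasible p K (discrete_borel (call_pmf p K pr))"
proof -
  have pr_nonneg: "\<forall>i. 0 \<le> pr i" using pr by (simp add: less_imp_le)
  have "(\<integral>\<^sup>+ x. ennreal (posp (x$i - K$i)) \<partial>discrete_borel (call_pmf p K pr)) = ennreal (p$i)"
    for i
  proof -
    have "pr l * posp (axis l (K$l + p$l / pr l) $ i - K$i) = (if l = i then p$i else 0)" for l
      using pr(1)[rule_format, of l] p[rule_format, of l] K[rule_format, of i]
      by (auto simp: axis_nth_eq posp_def)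
    then have "(\<Sum>l\<in>UNIV. ennreal (pr l) * ennreal (posp (axis l (K$l + p$l / pr l) $ i - K$i)))
        = ennreal (p$i)"
      using p by (simp add: ennreal_mult[symmetric] pr_nonneg posp_nonneg)
    moreover have "posp (0 - K$i) = 0" using K by (simp add: posp_def)
    ultimately show ?thesis
      by (simp add: nn_integral_discrete_borel call_pmf_def nn_integral_atoms_pmf[OF pr_nonneg pr(2)])
  qed
  moreover have "0 \<le> x$i" if "x \<in> set_pmf (call_pmf p K pr)" for x i
  proof -
    have "x = 0 \<or> (\<exists>l. x = axis l (K$l + p$l / pr l))"
      using that set_atoms_pmf[OF pr_nonneg pr(2), of "\<lambda>l. axis l (K$l + p$l / pr l)" 0]
      by (auto simp: call_pmf_def)
    then show ?thesis using p K pr(1) by (auto simp: axis_nth_eq less_imp_le)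
  qed
  then have "AE x in discrete_borel (call_pmf p K pr). \<forall>i. 0 \<le> x$i"
    using closed_positive_orthant by (intro AE_discrete_borel) auto
  ultimately show ?thesis
    unfolding call_feasible_def by (simp add: prob_space_discrete_borel)
qed

lemma basket_obj_call_pmf:
  assumes "0 \<le> K0" and pr: "\<forall>i. 0 < pr i" "sum pr UNIV \<le> 1"
  shows "basket_obj w K0 (discrete_borel (call_pmf p K pr))
      = ennreal (\<Sum>l\<in>UNIV. posp (p$l * w$l - pr l * (K0 - w$l * K$l)))"
proof -
  have pr_nonneg: "\<forall>i. 0 \<le> pr i" using pr by (simp add: less_imp_le)
  have "pr l * posp ((\<Sum>i\<in>UNIV. w$i * axis l (K$l + p$l / pr l) $ i) - K0)
      = posp (p$l * w$l - pr l * (K0 - w$l * K$l))" for l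
  proof -
    have "pr l * posp ((\<Sum>i\<in>UNIV. w$i * axis l (K$l + p$l / pr l) $ i) - K0)
        = posp (pr l * (w$l * (K$l + p$l / pr l) - K0))"
      using pr(1) by (simp add: axis_nth_eq if_distrib posp_mult less_imp_le cong: if_cong)
    also have "pr l * (w$l * (K$l + p$l / pr l) - K0) = p$l * w$l - pr l * (K0 - w$l * K$l)"
      using pr(1)[rule_format, of l] by (simp add: field_simps)
    finally show ?thesis .
  qed
  moreover have "posp ((\<Sum>i\<in>UNIV. w$i * 0$i) - K0) = 0" using assms(1) by (simp add: posp_def)
  ultimately show ?thesis
    unfolding basket_obj_def
    by (simp add: nn_integral_discrete_borel call_pmf_def nn_integral_atoms_pmf[OF pr_nonneg pr(2)]
        ennreal_mult[symmetric] pr_nonneg posp_nonneg)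
qed

definition dual_obj :: "real^'n \<Rightarrow> real^'n \<Rightarrow> real^'n \<Rightarrow> real \<Rightarrow> real^'n \<Rightarrow> real" where
  "dual_obj p K w K0 \<nu> = (\<Sum>i\<in>UNIV. posp (p$i * w$i - \<nu>$i * posp (K0 - w$i * K$i)))"

lemma dual_value_eq_INF_dual_obj:
  "dual_value p K w K0 = (INF \<nu>\<in>{\<nu>. (\<forall>i. 0 \<le> \<nu>$i) \<and> (\<Sum>i\<in>UNIV. \<nu>$i) = 1}. dual_obj p K w K0 \<nu>)"
  by (simp add: dual_value_def dual_obj_def)

lemma dual_obj_nonneg: "0 \<le> dual_obj p K w K0 \<nu>"
  by (simp add: dual_obj_def posp_nonneg sum_nonneg)

lemma dual_obj_antimono:
  assumes "\<forall>i. \<nu>$i \<le> \<nu>'$i"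
  shows "dual_obj p K w K0 \<nu>' \<le> dual_obj p K w K0 \<nu>"
  unfolding dual_obj_def
proof (intro sum_mono)
  fix i
  have "\<nu>$i * posp (K0 - w$i * K$i) \<le> \<nu>'$i * posp (K0 - w$i * K$i)"
    using assms posp_nonneg by (intro mult_right_mono) auto
  then show "posp (p$i * w$i - \<nu>'$i * posp (K0 - w$i * K$i))
      \<le> posp (p$i * w$i - \<nu>$i * posp (K0 - w$i * K$i))"
    by (simp add: posp_def)
qed

lemma exists_simplex_above:
  fixes \<nu> :: "real^'n"
  assumes "\<forall>i. 0 \<le> \<nu>$i" "(\<Sum>i\<in>UNIV. \<nu>$i) \<le> 1"
  shows "\<exists>\<nu>'. (\<forall>i. 0 \<le> \<nu>'$i) \<and> (\<Sum>i\<in>UNIV. \<nu>'$i) = 1 \<and> (\<forall>i. \<nu>$i \<le> \<nu>'$i)"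
proof (intro exI conjI)
  define \<nu>' where "\<nu>' = (\<chi> i. \<nu>$i + (1 - (\<Sum>i\<in>UNIV. \<nu>$i)) / real CARD('n))"
  show "\<forall>i. 0 \<le> \<nu>'$i" "\<forall>i. \<nu>$i \<le> \<nu>'$i" using assms by (simp_all add: \<nu>'_def)
  show "(\<Sum>i\<in>UNIV. \<nu>'$i) = 1" by (simp add: \<nu>'_def sum.distrib)
qed

text \<open>The weights of \<open>call_pmf\<close> are \<open>\<nu>\<close> pushed into the interior of the simplex, so that
  every atom has positive mass.\<close>
lemma call_pmf_seq_tendsto_dual_obj:
  fixes p K w \<nu> :: "real^'n"
  assumes p: "\<forall>i. 0 \<le> p$i" and K: "\<forall>i. 0 \<le> K$i" and "0 \<le> K0"
    and \<nu>: "\<forall>i. 0 \<le> \<nu>$i" "(\<Sum>i\<in>UNIV. \<nu>$i) \<le> 1" and \<nu>_zero: "\<forall>i. K0 \<le> w$i * K$i \<longrightarrow> \<nu>$i = 0"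
  shows "\<exists>P. (\<forall>k. call_feasible p K (discrete_borel (P k))) \<and>
           (\<lambda>k. basket_obj w K0 (discrete_borel (P k))) \<longlonglongrightarrow> ennreal (dual_obj p K w K0 \<nu>)"
proof (intro exI conjI allI)
  define \<epsilon> :: "nat \<Rightarrow> real" where "\<epsilon> k = inverse (real (Suc k))" for k
  define d :: real where "d = 1 / (real CARD('n) + 1)"
  define pr where "pr k i = (1 - \<epsilon> k) * \<nu>$i + \<epsilon> k * d" for k i
  have \<epsilon>: "0 < \<epsilon> k" "\<epsilon> k \<le> 1" for k by (auto simp: \<epsilon>_def field_simps)
  have pr_pos: "\<forall>i. 0 < pr k i" for k
    using \<epsilon>[of k] \<nu>(1) by (auto simp: pr_def d_def intro: add_nonneg_pos)
  have "(\<Sum>i\<in>UNIV. pr k i) = (1 - \<epsilon> k) * (\<Sum>i\<in>UNIV. \<nu>$i) + \<epsilon> k * (real CARD('n) * d)" for k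
    by (simp add: pr_def sum.distrib sum_distrib_left)
  also have "\<dots> k \<le> (1 - \<epsilon> k) * 1 + \<epsilon> k * 1" for k
    using \<epsilon>[of k] \<nu>(2) by (intro add_mono mult_left_mono) (auto simp: d_def field_simps)
  finally have pr_sum: "(\<Sum>i\<in>UNIV. pr k i) \<le> 1" for k by simp
  show "call_feasible p K (discrete_borel (call_pmf p K (pr k)))" for k
    using p K pr_pos pr_sum by (rule call_feasible_call_pmf)
  have "(\<lambda>k. pr k i) \<longlonglongrightarrow> (1 - 0) * \<nu>$i + 0 * d" for i
    unfolding pr_def \<epsilon>_def by (intro tendsto_intros LIMSEQ_inverse_real_of_nat)
  then have "(\<lambda>k. pr k i) \<longlonglongrightarrow> \<nu>$i" for i by simp
  then have "(\<lambda>k. \<Sum>l\<in>UNIV. posp (p$l * w$l - pr k l * (K0 - w$l * K$l)))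
      \<longlonglongrightarrow> (\<Sum>l\<in>UNIV. posp (p$l * w$l - \<nu>$l * (K0 - w$l * K$l)))"
    unfolding posp_def by (intro tendsto_intros)
  also have "(\<Sum>l\<in>UNIV. posp (p$l * w$l - \<nu>$l * (K0 - w$l * K$l))) = dual_obj p K w K0 \<nu>"
    unfolding dual_obj_def using \<nu>_zero by (intro sum.cong refl) (force simp: posp_def max_def)
  finally show "(\<lambda>k. basket_obj w K0 (discrete_borel (call_pmf p K (pr k))))
      \<longlonglongrightarrow> ennreal (dual_obj p K w K0 \<nu>)"
    by (simp add: basket_obj_call_pmf[OF \<open>0 \<le> K0\<close> pr_pos pr_sum])
qed

text \<open>With \<open>a i = K0 - w$i * K$i\<close> and \<open>q i = p$i * w$i\<close>, choosing
  \<open>lam i = min 1 (x / a i)\<close> and \<open>c = x\<close> in \<open>basket_obj_lower_bound\<close> bounds the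
  contribution of the assets with \<open>K$i * w$i < K0\<close> by this concave, piecewise linear
  function with kinks at the \<open>a i\<close>.\<close>
definition primal_bound :: "'i set \<Rightarrow> ('i \<Rightarrow> real) \<Rightarrow> ('i \<Rightarrow> real) \<Rightarrow> real \<Rightarrow> real" where
  "primal_bound J q a x = (\<Sum>i\<in>J. q i * min 1 (x / a i)) - x"

lemma primal_bound_zero [simp]: "primal_bound J q a 0 = 0"
  by (simp add: primal_bound_def)

lemma primal_bound_le_dual:
  assumes a: "\<forall>i\<in>J. 0 < a i" and "0 \<le> x" and \<nu>: "\<forall>i\<in>J. 0 \<le> \<nu> i" "(\<Sum>i\<in>J. \<nu> i) \<le> 1"
  shows "primal_bound J q a x \<le> (\<Sum>i\<in>J. posp (q i - \<nu> i * a i))"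
proof -
  have "(\<Sum>i\<in>J. q i * min 1 (x / a i) - x * \<nu> i) \<le> (\<Sum>i\<in>J. posp (q i - \<nu> i * a i))"
  proof (intro sum_mono)
    fix i assume i: "i \<in> J"
    define m where "m = min 1 (x / a i)"
    have m: "0 \<le> m" "m \<le> 1" "m * a i \<le> x"
      using a i \<open>0 \<le> x\<close> by (auto simp: m_def min_def field_simps)
    have "q i * m - x * \<nu> i \<le> m * (q i - \<nu> i * a i)"
      using mult_right_mono[OF m(3), of "\<nu> i"] \<nu>(1) i by (simp add: algebra_simps)
    also have "\<dots> \<le> posp (q i - \<nu> i * a i)"
      using m(1,2) by (rule mult_le_posp)
    finally show "q i * min 1 (x / a i) - x * \<nu> i \<le> posp (q i - \<nu> i * a i)"
      by (simp add: m_def)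
  qed
  moreover have "(\<Sum>i\<in>J. q i * min 1 (x / a i) - x * \<nu> i)
      = primal_bound J q a x + x * (1 - (\<Sum>i\<in>J. \<nu> i))"
    by (simp add: primal_bound_def sum_subtractf sum_distrib_left algebra_simps)
  moreover have "0 \<le> x * (1 - (\<Sum>i\<in>J. \<nu> i))" using \<open>0 \<le> x\<close> \<nu>(2) by simp
  ultimately show ?thesis by linarith
qed

lemma primal_bound_diff:
  assumes a: "\<forall>i\<in>J. 0 < a i" and "0 \<le> x" "x \<le> y" and no_kink: "\<forall>i\<in>J. a i \<le> x \<or> y \<le> a i"
  shows "primal_bound J q a y - primal_bound J q a x
      = (y - x) * ((\<Sum>i\<in>J. if y \<le> a i then q i / a i else 0) - 1)"
proof -
  have summand: "q i * min 1 (y / a i) - q i * min 1 (x / a i)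
      = (y - x) * (if y \<le> a i then q i / a i else 0)" if "i \<in> J" for i
    using a no_kink that \<open>0 \<le> x\<close> \<open>x \<le> y\<close>
    by (cases "y \<le> a i") (auto simp: min_def field_simps)
  have "primal_bound J q a y - primal_bound J q a x
      = (\<Sum>i\<in>J. q i * min 1 (y / a i) - q i * min 1 (x / a i)) - (y - x)"
    by (simp add: primal_bound_def sum_subtractf)
  also have "\<dots> = (y - x) * (\<Sum>i\<in>J. if y \<le> a i then q i / a i else 0) - (y - x)"
    by (simp add: summand sum_distrib_left)
  finally show ?thesis by (simp add: algebra_simps)
qed

lemma primal_bound_right_slope:
  assumes "finite J" and a: "\<forall>i\<in>J. 0 < a i" and "0 \<le> lam"
    and max: "\<forall>x\<in>insert 0 (a ` J). primal_bound J q a x \<le> primal_bound J q a lam"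
  shows "(\<Sum>i\<in>J. if lam < a i then q i / a i else 0) \<le> 1"
proof (cases "\<exists>i\<in>J. lam < a i")
  case False
  then show ?thesis by (simp add: sum.neutral)
next
  case True
  define y where "y = Min (a ` {i\<in>J. lam < a i})"
  have "y \<in> a ` {i\<in>J. lam < a i}"
    unfolding y_def using True \<open>finite J\<close> by (intro Min_in) auto
  then have y: "y \<in> a ` J" "lam < y" by auto
  have y_le: "y \<le> a i" if "i \<in> J" "lam < a i" for i
    unfolding y_def using that \<open>finite J\<close> by (intro Min_le) auto
  have "(\<Sum>i\<in>J. if y \<le> a i then q i / a i else 0) = (\<Sum>i\<in>J. if lam < a i then q i / a i else 0)"
    using y y_le by (intro sum.cong) force+
  moreover have "primal_bound J q a y - primal_bound J q a lam
      = (y - lam) * ((\<Sum>i\<in>J. if y \<le> a i then q i / a i else 0) - 1)"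
    using a \<open>0 \<le> lam\<close> y y_le by (intro primal_bound_diff) force+
  moreover have "primal_bound J q a y \<le> primal_bound J q a lam" using max y by blast
  ultimately have "(y - lam) * ((\<Sum>i\<in>J. if lam < a i then q i / a i else 0) - 1) \<le> 0"
    by simp
  then show ?thesis using y(2) by (simp add: mult_le_0_iff)
qed

lemma primal_bound_left_slope:
  assumes "finite J" and a: "\<forall>i\<in>J. 0 < a i" and "0 < lam"
    and max: "\<forall>x\<in>insert 0 (a ` J). primal_bound J q a x \<le> primal_bound J q a lam"
  shows "1 \<le> (\<Sum>i\<in>J. if lam \<le> a i then q i / a i else 0)"
proof -
  define x where "x = Max (insert 0 (a ` {i\<in>J. a i < lam}))"
  have "x \<in> insert 0 (a ` {i\<in>J. a i < lam})"
    unfolding x_def using \<open>finite J\<close> by (intro Max_in) auto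
  then have x: "x \<in> insert 0 (a ` J)" "x < lam" using \<open>0 < lam\<close> by auto
  have x_ge: "0 \<le> x" "\<And>i. i \<in> J \<Longrightarrow> a i < lam \<Longrightarrow> a i \<le> x"
    unfolding x_def using \<open>finite J\<close> by (auto intro: Max_ge)
  have "primal_bound J q a lam - primal_bound J q a x
      = (lam - x) * ((\<Sum>i\<in>J. if lam \<le> a i then q i / a i else 0) - 1)"
    using a x x_ge by (intro primal_bound_diff) force+
  moreover have "primal_bound J q a x \<le> primal_bound J q a lam" using max x by blast
  ultimately have "0 \<le> (lam - x) * ((\<Sum>i\<in>J. if lam \<le> a i then q i / a i else 0) - 1)"
    by simp
  then show ?thesis using x(2) by (simp add: zero_le_mult_iff)
qed

text \<open>The dual vector dictated by complementary slackness at a kink \<open>lam\<close> of \<open>primal_bound\<close>.\<close>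
definition kink_dual :: "('i \<Rightarrow> real) \<Rightarrow> ('i \<Rightarrow> real) \<Rightarrow> real \<Rightarrow> real \<Rightarrow> 'i \<Rightarrow> real" where
  "kink_dual q a lam \<theta> i =
     (if lam < a i then q i / a i else if lam = a i then \<theta> * (q i / a i) else 0)"

lemma primal_bound_minus_kink_dual:
  assumes a: "\<forall>i\<in>J. 0 < a i" and q: "\<forall>i\<in>J. 0 \<le> q i" and \<theta>: "0 \<le> \<theta>" "\<theta> \<le> 1"
  shows "primal_bound J q a lam - (\<Sum>i\<in>J. posp (q i - kink_dual q a lam \<theta> i * a i))
      = lam * ((\<Sum>i\<in>J. kink_dual q a lam \<theta> i) - 1)"
proof -
  let ?\<nu> = "kink_dual q a lam \<theta>"
  have summand: "q i * min 1 (lam / a i) - posp (q i - ?\<nu> i * a i) = lam * ?\<nu> i" if "i \<in> J" for i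
  proof -
    have ai: "0 < a i" "0 \<le> q i" using a q that by auto
    consider "lam < a i" | "lam = a i" | "a i < lam" by linarith
    then show ?thesis
    proof cases
      case 1
      then show ?thesis using ai by (simp add: kink_dual_def posp_def min_def)
    next
      case 2
      then have "?\<nu> i * a i = \<theta> * q i" "lam * ?\<nu> i = \<theta> * q i"
        using ai by (simp_all add: kink_dual_def)
      moreover have "posp (q i - \<theta> * q i) = (1 - \<theta>) * q i"
        using mult_left_le_one_le[OF ai(2) \<theta>] by (simp add: posp_def algebra_simps)
      ultimately show ?thesis using 2 ai by (simp add: algebra_simps)
    next
      case 3
      then show ?thesis using ai by (simp add: kink_dual_def posp_def min_def)
    qed
  qed
  have "primal_bound J q a lam - (\<Sum>i\<in>J. posp (q i - ?\<nu> i * a i))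
      = (\<Sum>i\<in>J. q i * min 1 (lam / a i) - posp (q i - ?\<nu> i * a i)) - lam"
    by (simp add: primal_bound_def sum_subtractf)
  also have "\<dots> = (\<Sum>i\<in>J. lam * ?\<nu> i) - lam"
    by (simp add: summand)
  also have "\<dots> = lam * ((\<Sum>i\<in>J. ?\<nu> i) - 1)"
    by (simp add: sum_distrib_left algebra_simps)
  finally show ?thesis .
qed

lemma exists_dual_le_primal_bound:
  assumes "finite J" and a: "\<forall>i\<in>J. 0 < a i" and q: "\<forall>i\<in>J. 0 \<le> q i" and "0 \<le> lam"
    and right: "(\<Sum>i\<in>J. if lam < a i then q i / a i else 0) \<le> 1"
    and left: "0 < lam \<Longrightarrow> 1 \<le> (\<Sum>i\<in>J. if lam \<le> a i then q i / a i else 0)"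
  shows "\<exists>\<nu>. (\<forall>i\<in>J. 0 \<le> \<nu> i) \<and> (\<Sum>i\<in>J. \<nu> i) \<le> 1 \<and>
            (\<Sum>i\<in>J. posp (q i - \<nu> i * a i)) \<le> primal_bound J q a lam"
proof -
  define S_gt where "S_gt = (\<Sum>i\<in>J. if lam < a i then q i / a i else 0)"
  define S_eq where "S_eq = (\<Sum>i\<in>J. if lam = a i then q i / a i else 0)"
  define \<theta> where "\<theta> = (if S_eq = 0 then 0 else (1 - S_gt) / S_eq)"
  have S_eq: "0 \<le> S_eq" unfolding S_eq_def using a q by (intro sum_nonneg) auto
  have right': "S_gt \<le> 1" using right by (simp add: S_gt_def)
  have "(\<Sum>i\<in>J. if lam \<le> a i then q i / a i else 0) = S_gt + S_eq"
    unfolding S_gt_def S_eq_def by (subst sum.distrib[symmetric]) (intro sum.cong, auto)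
  then have left': "lam = 0 \<or> 1 \<le> S_gt + S_eq" using left \<open>0 \<le> lam\<close> by force
  have lam_pos: "0 < lam" if S_eq_ne: "S_eq \<noteq> 0"
  proof -
    obtain i where "i \<in> J" "(if lam = a i then q i / a i else 0) \<noteq> 0"
      using sum.not_neutral_contains_not_neutral[OF S_eq_ne[unfolded S_eq_def]] by blast
    then show ?thesis using a by metis
  qed
  have \<theta>: "0 \<le> \<theta>" "\<theta> \<le> 1"
    using right' left' S_eq lam_pos by (auto simp: \<theta>_def divide_le_eq)
  have sum_\<nu>: "(\<Sum>i\<in>J. kink_dual q a lam \<theta> i) = S_gt + \<theta> * S_eq"
    unfolding S_gt_def S_eq_def kink_dual_def sum_distrib_left
    by (subst sum.distrib[symmetric]) (intro sum.cong, auto)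
  have "S_gt + \<theta> * S_eq \<le> 1" "lam = 0 \<or> S_gt + \<theta> * S_eq = 1"
    using left' right' by (auto simp: \<theta>_def)
  moreover have "\<forall>i\<in>J. 0 \<le> kink_dual q a lam \<theta> i"
    using a q \<theta> by (auto simp: kink_dual_def less_imp_le)
  ultimately show ?thesis
    using primal_bound_minus_kink_dual[OF a q \<theta>, of lam]
    by (intro exI[of _ "kink_dual q a lam \<theta>"]) (auto simp: sum_\<nu>)
qed

lemma Max_primal_bound_eq_dual:
  assumes "finite J" and a: "\<forall>i\<in>J. 0 < a i" and q: "\<forall>i\<in>J. 0 \<le> q i"
  shows "\<exists>\<nu>. (\<forall>i\<in>J. 0 \<le> \<nu> i) \<and> (\<Sum>i\<in>J. \<nu> i) \<le> 1 \<and>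
            (\<Sum>i\<in>J. posp (q i - \<nu> i * a i)) = Max (primal_bound J q a ` insert 0 (a ` J))"
proof -
  let ?B = "insert 0 (a ` J)"
  have "Max (primal_bound J q a ` ?B) \<in> primal_bound J q a ` ?B"
    using \<open>finite J\<close> by (intro Max_in) auto
  then obtain lam where lam: "lam \<in> ?B" "primal_bound J q a lam = Max (primal_bound J q a ` ?B)"
    by (metis imageE)
  have max: "\<forall>x\<in>?B. primal_bound J q a x \<le> primal_bound J q a lam"
    using lam(2) \<open>finite J\<close> by simp
  have "0 \<le> lam" using lam(1) a by auto
  obtain \<nu> where \<nu>: "\<forall>i\<in>J. 0 \<le> \<nu> i" "(\<Sum>i\<in>J. \<nu> i) \<le> 1"
    "(\<Sum>i\<in>J. posp (q i - \<nu> i * a i)) \<le> primal_bound J q a lam"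
    using exists_dual_le_primal_bound[OF assms \<open>0 \<le> lam\<close>] max
      primal_bound_right_slope[OF \<open>finite J\<close> a \<open>0 \<le> lam\<close>] primal_bound_left_slope[OF \<open>finite J\<close> a]
    by blast
  moreover have "primal_bound J q a lam \<le> (\<Sum>i\<in>J. posp (q i - \<nu> i * a i))"
    using primal_bound_le_dual[OF a \<open>0 \<le> lam\<close> \<nu>(1,2)] .
  ultimately show ?thesis using lam(2) by (intro exI[of _ \<nu>]) auto
qed

lemma Max_insert_zero_eq_Max_posp:
  assumes "finite A" "f 0 = 0"
  shows "Max (f ` insert 0 A) = (if A = {} then 0 else Max ((\<lambda>x. posp (f x)) ` A))"
proof (cases "A = {}")
  case False
  have "mono posp" by (auto simp: mono_def posp_def)
  then have "Max ((\<lambda>x. posp (f x)) ` A) = posp (Max (f ` A))"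
    using mono_Max_commute[of posp "f ` A"] assms(1) False by (simp add: image_image)
  then show ?thesis using assms False by (simp add: posp_def max.commute)
qed (use assms in simp)

locale basket_problem =
  fixes p K w :: "real^'n" and K0 :: real
  assumes p_nonneg: "\<forall>i. 0 \<le> p$i" and K_nonneg: "\<forall>i. 0 \<le> K$i" and w_nonneg: "\<forall>i. 0 \<le> w$i"
    and K0_pos: "0 < K0"
begin

definition J :: "'n set" where
  "J = {j. K$j * w$j < K0}"

definition q :: "'n \<Rightarrow> real" where
  "q i = p$i * w$i"

definition a :: "'n \<Rightarrow> real" where
  "a i = K0 - K$i * w$i"

definition opt :: real where
  "opt = (\<Sum>i\<in>-J. q i) + Max (primal_bound J q a ` insert 0 (a ` J))"

lemma a_pos: "\<forall>i\<in>J. 0 < a i"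
  by (simp add: J_def a_def)

lemma q_nonneg: "0 \<le> q i"
  using p_nonneg w_nonneg by (simp add: q_def)

lemma posp_K0_diff: "posp (K0 - w$i * K$i) = (if i \<in> J then a i else 0)"
  by (auto simp: posp_def J_def a_def mult.commute)

lemma exists_Max_primal_bound:
  obtains x where "0 \<le> x" "primal_bound J q a x = Max (primal_bound J q a ` insert 0 (a ` J))"
proof -
  have "Max (primal_bound J q a ` insert 0 (a ` J)) \<in> primal_bound J q a ` insert 0 (a ` J)"
    by (intro Max_in) auto
  then obtain x where x: "x \<in> insert 0 (a ` J)"
    "Max (primal_bound J q a ` insert 0 (a ` J)) = primal_bound J q a x"
    by (rule imageE)
  have "0 \<le> x" using x(1) a_pos by (auto simp: less_imp_le)
  then show ?thesis using x(2) by (intro that) simp_all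
qed

lemma sum_split_J: "(\<Sum>i\<in>UNIV. if i \<in> J then f i else q i) = (\<Sum>i\<in>J. f i) + (\<Sum>i\<in>-J. q i)"
  by (simp add: sum.If_cases)

lemma dual_obj_eq: "dual_obj p K w K0 \<nu> = (\<Sum>i\<in>-J. q i) + (\<Sum>i\<in>J. posp (q i - \<nu>$i * a i))"
proof -
  have "dual_obj p K w K0 \<nu> = (\<Sum>i\<in>UNIV. if i \<in> J then posp (q i - \<nu>$i * a i) else q i)"
    unfolding dual_obj_def posp_K0_diff using q_nonneg by (intro sum.cong) (auto simp: q_def posp_def)
  then show ?thesis by (simp add: sum_split_J)
qed

lemma opt_le_dual_obj:
  assumes "\<forall>i. 0 \<le> \<nu>$i" "(\<Sum>i\<in>UNIV. \<nu>$i) \<le> 1"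
  shows "opt \<le> dual_obj p K w K0 \<nu>"
proof -
  obtain x where x: "0 \<le> x" "primal_bound J q a x = Max (primal_bound J q a ` insert 0 (a ` J))"
    by (rule exists_Max_primal_bound)
  have "(\<Sum>i\<in>J. \<nu>$i) \<le> 1"
    using assms sum_mono2[of UNIV J "\<lambda>i. \<nu>$i"] by auto
  then have "primal_bound J q a x \<le> (\<Sum>i\<in>J. posp (q i - \<nu>$i * a i))"
    using a_pos x(1) assms(1) by (intro primal_bound_le_dual) auto
  then show ?thesis using x(2) by (simp add: opt_def dual_obj_eq)
qed

lemma exists_optimal_dual:
  "\<exists>\<nu>. (\<forall>i. 0 \<le> \<nu>$i) \<and> (\<Sum>i\<in>UNIV. \<nu>$i) \<le> 1 \<and> (\<forall>i. i \<notin> J \<longrightarrow> \<nu>$i = 0) \<and>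
       dual_obj p K w K0 \<nu> = opt"
proof -
  obtain \<nu> where \<nu>: "\<forall>i\<in>J. 0 \<le> \<nu> i" "(\<Sum>i\<in>J. \<nu> i) \<le> 1"
    "(\<Sum>i\<in>J. posp (q i - \<nu> i * a i)) = Max (primal_bound J q a ` insert 0 (a ` J))"
    using Max_primal_bound_eq_dual[of J a q] a_pos q_nonneg by auto
  define \<nu>' where "\<nu>' = (\<chi> i. if i \<in> J then \<nu> i else 0)"
  have "(\<Sum>i\<in>UNIV. \<nu>'$i) = (\<Sum>i\<in>J. \<nu> i)"
    by (simp add: \<nu>'_def sum.If_cases)
  moreover have "dual_obj p K w K0 \<nu>' = opt"
    using \<nu>(3) by (simp add: dual_obj_eq opt_def \<nu>'_def)
  ultimately show ?thesis
    using \<nu>(1,2) by (intro exI[of _ \<nu>']) (auto simp: \<nu>'_def)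
qed

lemma opt_le_basket_obj:
  assumes "call_feasible p K M"
  shows "ennreal opt \<le> basket_obj w K0 M"
proof -
  obtain x where x: "0 \<le> x" "primal_bound J q a x = Max (primal_bound J q a ` insert 0 (a ` J))"
    by (rule exists_Max_primal_bound)
  define lam where "lam i = (if i \<in> J then min 1 (x / a i) else 1)" for i
  have lam: "\<forall>i. 0 \<le> lam i \<and> lam i \<le> 1"
    using x(1) a_pos by (auto simp: lam_def intro: divide_nonneg_pos)
  have "lam i * posp (K0 - w$i * K$i) \<le> x" for i
  proof (cases "i \<in> J")
    case True
    then have "0 < a i" using a_pos by blast
    then have "min 1 (x / a i) * a i \<le> x / a i * a i" by (intro mult_right_mono) auto
    then show ?thesis using True \<open>0 < a i\<close> by (simp add: lam_def posp_K0_diff)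
  qed (use x(1) in \<open>simp add: posp_K0_diff\<close>)
  then have "ennreal ((\<Sum>i\<in>UNIV. lam i * w$i * p$i) - x) \<le> basket_obj w K0 M"
    using p_nonneg K_nonneg w_nonneg K0_pos x(1) lam assms by (intro basket_obj_lower_bound) auto
  moreover have "(\<Sum>i\<in>UNIV. lam i * w$i * p$i) = (\<Sum>i\<in>UNIV. if i \<in> J then q i * min 1 (x / a i) else q i)"
    by (intro sum.cong) (auto simp: lam_def q_def)
  ultimately show ?thesis
    using x(2) by (simp add: sum_split_J opt_def primal_bound_def algebra_simps)
qed

lemma dual_value_eq_opt: "dual_value p K w K0 = opt"
proof -
  let ?simplex = "{\<nu>. (\<forall>i. 0 \<le> \<nu>$i) \<and> (\<Sum>i\<in>UNIV. \<nu>$i) = 1}"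
  obtain \<nu> where \<nu>: "\<forall>i. 0 \<le> \<nu>$i" "(\<Sum>i\<in>UNIV. \<nu>$i) \<le> 1" "dual_obj p K w K0 \<nu> = opt"
    using exists_optimal_dual by blast
  obtain \<nu>' where \<nu>': "\<nu>' \<in> ?simplex" "\<forall>i. \<nu>$i \<le> \<nu>'$i"
    using exists_simplex_above[OF \<nu>(1,2)] by blast
  have "dual_obj p K w K0 \<nu>' \<le> opt"
    using dual_obj_antimono[OF \<nu>'(2), of p K w K0] \<nu>(3) by simp
  then show ?thesis
    unfolding dual_value_eq_INF_dual_obj
    using \<nu>'(1) dual_obj_nonneg opt_le_dual_obj
    by (intro antisym cINF_lower2 cINF_greatest bdd_belowI) auto
qed

lemma exists_pmf_seq_tendsto_opt:
  "\<exists>P. (\<forall>k. call_feasible p K (discrete_borel (P k))) \<and>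
       (\<lambda>k. basket_obj w K0 (discrete_borel (P k))) \<longlonglongrightarrow> ennreal opt"
proof -
  obtain \<nu> where "\<forall>i. 0 \<le> \<nu>$i" "(\<Sum>i\<in>UNIV. \<nu>$i) \<le> 1" "\<forall>i. i \<notin> J \<longrightarrow> \<nu>$i = 0"
    "dual_obj p K w K0 \<nu> = opt"
    using exists_optimal_dual by blast
  then show ?thesis
    using call_pmf_seq_tendsto_dual_obj[OF p_nonneg K_nonneg, of K0 \<nu> w] K0_pos
    by (auto simp: J_def mult.commute)
qed

lemma p_inf_eq_opt: "p_inf p K w K0 = ennreal opt"
proof (rule antisym)
  obtain P where P: "\<forall>k. call_feasible p K (discrete_borel (P k))"
    "(\<lambda>k. basket_obj w K0 (discrete_borel (P k))) \<longlonglongrightarrow> ennreal opt"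
    using exists_pmf_seq_tendsto_opt by blast
  have "\<forall>k. p_inf p K w K0 \<le> basket_obj w K0 (discrete_borel (P k))"
    using P(1) unfolding p_inf_def by (auto intro: INF_lower)
  then show "p_inf p K w K0 \<le> ennreal opt"
    using P(2) by (intro tendsto_lowerbound) (auto intro: always_eventually)
  show "ennreal opt \<le> p_inf p K w K0"
    unfolding p_inf_def by (auto intro: INF_greatest opt_le_basket_obj)
qed

lemma closed_form_eq_opt: "closed_form p K w K0 = opt"
proof -
  have "{i. K0 \<le> K$i * w$i} = -J" by (auto simp: J_def)
  moreover have "posp ((\<Sum>i\<in>J. p$i * w$i * min 1 ((K0 - K$j * w$j) / (K0 - K$i * w$i))) - K0 + w$j * K$j)
      = posp (primal_bound J q a (a j))" for j
    by (simp add: primal_bound_def q_def a_def algebra_simps)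
  ultimately have "closed_form p K w K0
      = (\<Sum>i\<in>-J. q i) + (if J = {} then 0 else Max ((\<lambda>x. posp (primal_bound J q a x)) ` a ` J))"
    by (simp add: closed_form_def Let_def J_def[symmetric] q_def image_image)
  then show ?thesis
    unfolding opt_def by (subst Max_insert_zero_eq_Max_posp) simp_all
qed

end

theorem mainTheorem4:
  fixes p K w :: "real^'n" and K0 :: real
  assumes "\<forall>i. 0 \<le> p$i" and "\<forall>i. 0 < K$i" and "\<forall>i. 0 < w$i" and "0 < K0"
  shows "p_inf p K w K0 = ennreal (dual_value p K w K0)
       \<and> dual_value p K w K0 = closed_form p K w K0
       \<and> (\<exists>P :: nat \<Rightarrow> (real^'n) pmf.
            (\<forall>k. call_feasible p K (discrete_borel (P k))) \<and>
            (\<lambda>k. basket_obj w K0 (discrete_borel (P k))) \<longlonglongrightarrow> p_inf p K w K0)"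
proof -
  interpret basket_problem p K w K0
    using assms by unfold_locales (auto simp: less_imp_le)
  show ?thesis
    using p_inf_eq_opt dual_value_eq_opt closed_form_eq_opt exists_pmf_seq_tendsto_opt by simp
qed

end
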